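(* Let $G$ be an f-closed and splittable query graph, and let $u,v\in V(G)$. Suppose $P_A$ and $P_B$ are two distinct directed simple paths from $u$ to $v$ such that no vertex of $P_A$ other than $u,v$ lies in the same strongly connected component as a vertex of $P_B$ other than $u,v$. Then $v\in u^{\oplus}$.
   Context: $G=G[Q]$ is the query graph of a Boolean CQ without self-joins with atoms $R(u,v)$, $u\ne v$, first attribute the key: vertices are variables, each atom gives an edge $e_R=(u_R,v_R)$ (parallel edges from different atoms allowed), consistent/inconsistent according to the type of $R$; $E^i$ = inconsistent edges. Paths may have zero edges. $x\to y$: a directed path with only consistent edges; $x\leadsto y$: any directed path; undirected paths ignore directions; for a path $P$ and vertex set $N$, $P\cap N$ is the set of vertices of $P$ in $N$. $u^{\oplus}=\{v:u\to v\}$, $u^+=\{v:u\leadsto v\}$, $u^{+,R}=\{v: u\leadsto v$ in $G-\{e_R\}\}$. For $R,S\in E^i$: $R\sim S$ iff $u_S\in u_R^+$ and $u_R\in u_S^+$; $[R]$ the class of $R$; $coupled^+(R)=[R]\cup\{S\in E^i:\exists$ undirected path $P$ from $v_R$ to $u_S$ with $P\cap u_R^{+,R}=\emptyset\}$; $G$ is splittable if there are no $R,S\in E^i$ with $R\in coupled^+(S)$, $S\in coupled^+(R)$ and $R\not\sim S$. $G$ is f-closed if for every $R\in E^i$, $v_R^{\oplus}\cap u_R^{+,R}\subseteq u_R^{\oplus}$. *)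

theory Defs
  imports Main
begin

text \<open>A query graph is given by a finite set E of edges (one per atom), maps src/tgt
giving the key variable u_R and the non-key variable v_R of each atom, and the set Ei of
inconsistent edges. Parallel edges are allowed since edges are abstract identities.\<close>

definition query_graph :: "'e set \<Rightarrow> 'e set \<Rightarrow> ('e \<Rightarrow> 'v) \<Rightarrow> ('e \<Rightarrow> 'v) \<Rightarrow> bool" where
  "query_graph E Ei src tgt \<longleftrightarrow> finite E \<and> Ei \<subseteq> E \<and> (\<forall>e\<in>E. src e \<noteq> tgt e)"

definition qvertices :: "'e set \<Rightarrow> ('e \<Rightarrow> 'v) \<Rightarrow> ('e \<Rightarrow> 'v) \<Rightarrow> 'v set" where
  "qvertices E src tgt = src ` E \<union> tgt ` E"

fun dwalk :: "'e set \<Rightarrow> ('e \<Rightarrow> 'v) \<Rightarrow> ('e \<Rightarrow> 'v) \<Rightarrow> 'v \<Rightarrow> 'e list \<Rightarrow> 'v \<Rightarrow> bool" where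
  "dwalk F src tgt x [] y = (x = y)"
| "dwalk F src tgt x (e # es) y = (e \<in> F \<and> src e = x \<and> dwalk F src tgt (tgt e) es y)"

fun uwalk :: "'e set \<Rightarrow> ('e \<Rightarrow> 'v) \<Rightarrow> ('e \<Rightarrow> 'v) \<Rightarrow> 'v \<Rightarrow> 'e list \<Rightarrow> 'v \<Rightarrow> bool" where
  "uwalk F src tgt x [] y = (x = y)"
| "uwalk F src tgt x (e # es) y = (e \<in> F \<and>
     ((src e = x \<and> uwalk F src tgt (tgt e) es y) \<or> (tgt e = x \<and> uwalk F src tgt (src e) es y)))"

definition dverts :: "('e \<Rightarrow> 'v) \<Rightarrow> 'v \<Rightarrow> 'e list \<Rightarrow> 'v list" where
  "dverts tgt x es = x # map tgt es"

fun uverts :: "('e \<Rightarrow> 'v) \<Rightarrow> ('e \<Rightarrow> 'v) \<Rightarrow> 'v \<Rightarrow> 'e list \<Rightarrow> 'v list" where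
  "uverts src tgt x [] = [x]"
| "uverts src tgt x (e # es) =
     x # uverts src tgt (if src e = x then tgt e else src e) es"

definition simple_dpath :: "'e set \<Rightarrow> ('e \<Rightarrow> 'v) \<Rightarrow> ('e \<Rightarrow> 'v) \<Rightarrow> 'v \<Rightarrow> 'e list \<Rightarrow> 'v \<Rightarrow> bool" where
  "simple_dpath F src tgt x es y \<longleftrightarrow> dwalk F src tgt x es y \<and> distinct (dverts tgt x es)"

definition reach :: "'e set \<Rightarrow> ('e \<Rightarrow> 'v) \<Rightarrow> ('e \<Rightarrow> 'v) \<Rightarrow> 'v \<Rightarrow> 'v \<Rightarrow> bool" where
  "reach F src tgt x y \<longleftrightarrow> (\<exists>es. dwalk F src tgt x es y)"

definition creach :: "'e set \<Rightarrow> 'e set \<Rightarrow> ('e \<Rightarrow> 'v) \<Rightarrow> ('e \<Rightarrow> 'v) \<Rightarrow> 'v \<Rightarrow> 'v \<Rightarrow> bool" where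
  "creach E Ei src tgt x y \<longleftrightarrow> reach (E - Ei) src tgt x y"

definition oplus_set :: "'e set \<Rightarrow> 'e set \<Rightarrow> ('e \<Rightarrow> 'v) \<Rightarrow> ('e \<Rightarrow> 'v) \<Rightarrow> 'v \<Rightarrow> 'v set" where
  "oplus_set E Ei src tgt x = {y. creach E Ei src tgt x y}"

definition plus_set :: "'e set \<Rightarrow> ('e \<Rightarrow> 'v) \<Rightarrow> ('e \<Rightarrow> 'v) \<Rightarrow> 'v \<Rightarrow> 'v set" where
  "plus_set E src tgt x = {y. reach E src tgt x y}"

definition plus_set_wo :: "'e set \<Rightarrow> ('e \<Rightarrow> 'v) \<Rightarrow> ('e \<Rightarrow> 'v) \<Rightarrow> 'e \<Rightarrow> 'v \<Rightarrow> 'v set" where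
  "plus_set_wo E src tgt R x = {y. reach (E - {R}) src tgt x y}"

definition equiv_inc :: "'e set \<Rightarrow> ('e \<Rightarrow> 'v) \<Rightarrow> ('e \<Rightarrow> 'v) \<Rightarrow> 'e \<Rightarrow> 'e \<Rightarrow> bool" where
  "equiv_inc E src tgt R S \<longleftrightarrow> src S \<in> plus_set E src tgt (src R) \<and> src R \<in> plus_set E src tgt (src S)"

definition eq_class :: "'e set \<Rightarrow> 'e set \<Rightarrow> ('e \<Rightarrow> 'v) \<Rightarrow> ('e \<Rightarrow> 'v) \<Rightarrow> 'e \<Rightarrow> 'e set" where
  "eq_class E Ei src tgt R = {S \<in> Ei. equiv_inc E src tgt R S}"

definition coupled_plus :: "'e set \<Rightarrow> 'e set \<Rightarrow> ('e \<Rightarrow> 'v) \<Rightarrow> ('e \<Rightarrow> 'v) \<Rightarrow> 'e \<Rightarrow> 'e set" where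
  "coupled_plus E Ei src tgt R = eq_class E Ei src tgt R \<union>
     {S \<in> Ei. \<exists>es. uwalk E src tgt (tgt R) es (src S) \<and>
                 set (uverts src tgt (tgt R) es) \<inter> plus_set_wo E src tgt R (src R) = {}}"

definition splittable :: "'e set \<Rightarrow> 'e set \<Rightarrow> ('e \<Rightarrow> 'v) \<Rightarrow> ('e \<Rightarrow> 'v) \<Rightarrow> bool" where
  "splittable E Ei src tgt \<longleftrightarrow> \<not> (\<exists>R\<in>Ei. \<exists>S\<in>Ei. R \<in> coupled_plus E Ei src tgt S \<and>
      S \<in> coupled_plus E Ei src tgt R \<and> \<not> equiv_inc E src tgt R S)"

definition f_closed :: "'e set \<Rightarrow> 'e set \<Rightarrow> ('e \<Rightarrow> 'v) \<Rightarrow> ('e \<Rightarrow> 'v) \<Rightarrow> bool" where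
  "f_closed E Ei src tgt \<longleftrightarrow> (\<forall>R\<in>Ei. oplus_set E Ei src tgt (tgt R) \<inter> plus_set_wo E src tgt R (src R)
      \<subseteq> oplus_set E Ei src tgt (src R))"

definition same_scc :: "'e set \<Rightarrow> ('e \<Rightarrow> 'v) \<Rightarrow> ('e \<Rightarrow> 'v) \<Rightarrow> 'v \<Rightarrow> 'v \<Rightarrow> bool" where
  "same_scc E src tgt a b \<longleftrightarrow> reach E src tgt a b \<and> reach E src tgt b a"

end

theory Submission
  imports Defs
begin

text \<open>Suppose \<open>v \<notin> u\<^sup>\<oplus>\<close>. On each path take the last edge whose source cannot reach \<open>v\<close>
along consistent edges: \<open>R\<close> on \<open>P\<^sub>A\<close> and \<open>S\<close> on \<open>P\<^sub>B\<close>. Such an edge is inconsistent, and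
f-closedness shows that \<open>v \<notin> u\<^sub>R\<^sup>+\<^sup>,\<^sup>R\<close>. Then \<open>u\<^sub>R\<close> is an inner vertex of \<open>P\<^sub>A\<close> (if \<open>u\<^sub>R = u\<close>, the
path \<open>P\<^sub>B\<close> would reach \<open>v\<close> without \<open>R\<close>), so \<open>R\<close> is not on \<open>P\<^sub>B\<close>. Going from \<open>v\<^sub>R\<close> to \<open>v\<close> along
\<open>P\<^sub>A\<close> and back along \<open>P\<^sub>B\<close> to \<open>u\<^sub>S\<close> visits only vertices that reach \<open>v\<close> without \<open>R\<close>, hence
none of \<open>u\<^sub>R\<^sup>+\<^sup>,\<^sup>R\<close>; thus \<open>S \<in> coupled\<^sup>+(R)\<close>, and symmetrically \<open>R \<in> coupled\<^sup>+(S)\<close>. As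
\<open>u\<^sub>R\<close> and \<open>u\<^sub>S\<close> are inner vertices of different paths they lie in different strongly
connected components, so \<open>R \<not>\<sim> S\<close>, contradicting splittability.\<close>

lemma dwalk_append: "dwalk F s t x (p @ q) y \<longleftrightarrow> (\<exists>z. dwalk F s t x p z \<and> dwalk F s t z q y)"
  by (induction p arbitrary: x) auto

lemma uwalk_append: "uwalk F s t x (p @ q) y \<longleftrightarrow> (\<exists>z. uwalk F s t x p z \<and> uwalk F s t z q y)"
  by (induction p arbitrary: x) auto

lemma dwalk_mono: "dwalk F s t x es y \<Longrightarrow> set es \<subseteq> F' \<Longrightarrow> dwalk F' s t x es y"
  by (induction es arbitrary: x) auto

lemma dwalk_edges_subset: "dwalk F s t x es y \<Longrightarrow> set es \<subseteq> F"
  by (induction es arbitrary: x) auto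

lemma dwalk_imp_uwalk: "dwalk F s t x es y \<Longrightarrow> uwalk F s t x es y"
  by (induction es arbitrary: x) auto

lemma dwalk_imp_uwalk_rev: "dwalk F s t x es y \<Longrightarrow> uwalk F s t y (rev es) x"
  by (induction es arbitrary: x) (auto simp: uwalk_append)

lemma dwalk_last_vertex: "dwalk F s t x es y \<Longrightarrow> es \<noteq> [] \<Longrightarrow> y \<in> t ` set es"
  by (induction es arbitrary: x) fastforce+

lemma dwalk_edge_ends_in_dverts:
  "dwalk F s t x es y \<Longrightarrow> e \<in> set es \<Longrightarrow> s e \<in> set (dverts t x es) \<and> t e \<in> set (dverts t x es)"
  by (induction es arbitrary: x) (auto simp: dverts_def)

lemma reach_refl: "reach F s t x x"
  unfolding reach_def by (metis dwalk.simps(1))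

lemma reach_trans: "reach F s t x y \<Longrightarrow> reach F s t y z \<Longrightarrow> reach F s t x z"
  unfolding reach_def by (metis dwalk_append)

lemma dwalk_dverts_reach: "dwalk F s t x es y \<Longrightarrow> w \<in> set (dverts t x es) \<Longrightarrow> reach F s t w y"
proof (induction es arbitrary: x)
  case Nil
  then show ?case by (simp add: dverts_def reach_refl)
next
  case (Cons e es)
  show ?case
  proof (cases "w = x")
    case True
    then show ?thesis using Cons.prems unfolding reach_def by blast
  next
    case False
    then show ?thesis using Cons by (auto simp: dverts_def)
  qed
qed

lemma dwalk_edge_ends_reach:
  "dwalk F s t x es y \<Longrightarrow> e \<in> set es \<Longrightarrow> reach F s t (s e) y \<and> reach F s t (t e) y"
  using dwalk_dverts_reach dwalk_edge_ends_in_dverts by metis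

lemma set_uverts_subset:
  "x \<in> T \<Longrightarrow> \<forall>e\<in>set es. s e \<in> T \<and> t e \<in> T \<Longrightarrow> set (uverts s t x es) \<subseteq> T"
  by (induction es arbitrary: x) auto

lemma dwalk_last_exit_edge:
  assumes "dwalk F s t x es y" "\<not> P x" "P y"
  obtains p e q where "es = p @ e # q" "e \<in> F" "\<not> P (s e)" "P (t e)" "dwalk F s t (t e) q y"
  using assms
proof (induction es arbitrary: x thesis)
  case Nil
  then show ?case by simp
next
  case (Cons e es)
  then have e: "e \<in> F" "s e = x" "dwalk F s t (t e) es y"
    by simp_all
  show ?case
  proof (cases "P (t e)")
    case True
    then show ?thesis
      using Cons.prems(1)[of "[]" e es] Cons.prems(3) e by simp
  next
    case False
    obtain p e' q where "es = p @ e' # q" "e' \<in> F" "\<not> P (s e')" "P (t e')" "dwalk F s t (t e') q y"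
      by (rule Cons.IH[OF _ e(3) False Cons.prems(4)])
    then show ?thesis
      using Cons.prems(1)[of "e # p" e' q] by simp
  qed
qed

lemma simple_dpath_single_edge:
  assumes "simple_dpath F s t x es y" "e \<in> set es" "s e = x" "t e = y"
  shows "es = [e]"
proof -
  obtain p q where es: "es = p @ e # q"
    using assms(2) by (meson split_list)
  have distinct: "distinct (x # map t p @ t e # map t q)"
    using assms(1) es by (simp add: simple_dpath_def dverts_def)
  have "dwalk F s t x p (s e)" "dwalk F s t (t e) q y"
    using assms(1) es by (auto simp: simple_dpath_def dwalk_append)
  then have "p \<noteq> [] \<Longrightarrow> x \<in> t ` set p" "q \<noteq> [] \<Longrightarrow> y \<in> t ` set q"
    using assms(3) by (auto dest: dwalk_last_vertex)
  then have "p = []" "q = []"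
    using distinct assms(4) by auto
  then show ?thesis
    using es by simp
qed

lemma same_scc_refl: "same_scc E s t a a"
  unfolding same_scc_def by (simp add: reach_refl)

lemma coupled_plus_if_walks_avoid_edge:
  assumes no_reach: "\<not> reach (E - {R}) src tgt (src R) w"
    and walk_R: "dwalk (E - {R}) src tgt (tgt R) p w"
    and walk_S: "dwalk (E - {R}) src tgt (src S) q w"
    and "S \<in> Ei"
  shows "S \<in> coupled_plus E Ei src tgt R"
proof -
  define T where "T = {x. reach (E - {R}) src tgt x w}"
  have "dwalk E src tgt (tgt R) p w" "dwalk E src tgt (src S) q w"
    using dwalk_mono[OF walk_R] dwalk_edges_subset[OF walk_R]
      dwalk_mono[OF walk_S] dwalk_edges_subset[OF walk_S] by blast+
  then have walk: "uwalk E src tgt (tgt R) (p @ rev q) (src S)"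
    unfolding uwalk_append by (blast dest: dwalk_imp_uwalk dwalk_imp_uwalk_rev)
  have "tgt R \<in> T"
    using walk_R unfolding T_def reach_def by blast
  moreover have "\<forall>e\<in>set (p @ rev q). src e \<in> T \<and> tgt e \<in> T"
    using dwalk_edge_ends_reach[OF walk_R] dwalk_edge_ends_reach[OF walk_S] unfolding T_def by auto
  ultimately have "set (uverts src tgt (tgt R) (p @ rev q)) \<subseteq> T"
    by (rule set_uverts_subset)
  moreover have "T \<inter> plus_set_wo E src tgt R (src R) = {}"
  proof (rule equals0I)
    fix x
    assume "x \<in> T \<inter> plus_set_wo E src tgt R (src R)"
    then have "reach (E - {R}) src tgt (src R) w"
      unfolding T_def plus_set_wo_def using reach_trans by fastforce
    with no_reach show False ..
  qed
  ultimately have "set (uverts src tgt (tgt R) (p @ rev q)) \<inter> plus_set_wo E src tgt R (src R) = {}"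
    by blast
  with walk \<open>S \<in> Ei\<close> show ?thesis
    unfolding coupled_plus_def by blast
qed

lemma exit_edge_inconsistent:
  assumes "R \<in> E" "\<not> creach E Ei src tgt (src R) w" "creach E Ei src tgt (tgt R) w"
  shows "R \<in> Ei"
proof (rule ccontr)
  assume "R \<notin> Ei"
  then have "creach E Ei src tgt (src R) (tgt R)"
    using assms(1) unfolding creach_def reach_def by (metis Diff_iff dwalk.simps)
  then show False
    using assms(2,3) reach_trans unfolding creach_def by metis
qed

lemma f_closed_exit_edge_not_reach:
  assumes "f_closed E Ei src tgt" "R \<in> Ei"
    and "\<not> creach E Ei src tgt (src R) w" "creach E Ei src tgt (tgt R) w"
  shows "\<not> reach (E - {R}) src tgt (src R) w"
  using assms unfolding f_closed_def oplus_set_def plus_set_wo_def by blast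

locale scc_separated_paths =
  fixes E Ei :: "'e set" and src tgt :: "'e \<Rightarrow> 'v" and u v :: 'v and PA PB :: "'e list"
  assumes query_graph: "query_graph E Ei src tgt"
    and f_closed: "f_closed E Ei src tgt"
    and path_A: "simple_dpath E src tgt u PA v"
    and path_B: "simple_dpath E src tgt u PB v"
    and paths_differ: "PA \<noteq> PB"
    and inner_separated: "\<forall>a \<in> set (dverts tgt u PA) - {u, v}. \<forall>b \<in> set (dverts tgt u PB) - {u, v}.
           \<not> same_scc E src tgt a b"
begin

lemma swap: "scc_separated_paths E Ei src tgt u v PB PA"
proof
  show "\<forall>a \<in> set (dverts tgt u PB) - {u, v}. \<forall>b \<in> set (dverts tgt u PA) - {u, v}.
      \<not> same_scc E src tgt a b"
    using inner_separated unfolding same_scc_def by blast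
qed (use query_graph f_closed path_A path_B paths_differ in simp_all)

lemma walk_A: "dwalk E src tgt u PA v" and walk_B: "dwalk E src tgt u PB v"
  using path_A path_B by (simp_all add: simple_dpath_def)

lemma no_common_inner_vertex:
  "a \<in> set (dverts tgt u PA) - {u, v} \<Longrightarrow> a \<notin> set (dverts tgt u PB) - {u, v}"
  using inner_separated same_scc_refl[of E src tgt a] by blast

lemma exit_edge_not_reach:
  assumes "R \<in> set PA" "\<not> creach E Ei src tgt (src R) v" "creach E Ei src tgt (tgt R) v"
  shows "\<not> reach (E - {R}) src tgt (src R) v"
proof -
  have "R \<in> E"
    using dwalk_edges_subset[OF walk_A] assms(1) by blast
  then have "R \<in> Ei"
    using assms(2,3) by (rule exit_edge_inconsistent)
  then show ?thesis
    using f_closed_exit_edge_not_reach[OF f_closed _ assms(2,3)] by blast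
qed

lemma exit_edge_source_inner:
  assumes "R \<in> set PA" "\<not> creach E Ei src tgt (src R) v" "creach E Ei src tgt (tgt R) v"
  shows "src R \<in> set (dverts tgt u PA) - {u, v}"
proof -
  have no_reach: "\<not> reach (E - {R}) src tgt (src R) v"
    using assms by (rule exit_edge_not_reach)
  have "src R \<noteq> u"
  proof
    assume source: "src R = u"
    have "R \<in> set PB"
    proof (rule ccontr)
      assume "R \<notin> set PB"
      then have "set PB \<subseteq> E - {R}"
        using dwalk_edges_subset[OF walk_B] by blast
      then have "dwalk (E - {R}) src tgt u PB v"
        by (rule dwalk_mono[OF walk_B])
      then show False
        using no_reach source unfolding reach_def by blast
    qed
    have "R \<in> E"
      using dwalk_edges_subset[OF walk_A] assms(1) by blast
    then have "tgt R \<noteq> u"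
      using query_graph source unfolding query_graph_def by blast
    moreover have "tgt R \<noteq> v"
    proof
      assume "tgt R = v"
      then have "PA = [R]" "PB = [R]"
        using simple_dpath_single_edge[OF path_A assms(1) source]
          simple_dpath_single_edge[OF path_B \<open>R \<in> set PB\<close> source] by simp_all
      with paths_differ show False
        by simp
    qed
    moreover have "tgt R \<in> set (dverts tgt u PA)" "tgt R \<in> set (dverts tgt u PB)"
      using dwalk_edge_ends_in_dverts[OF walk_A assms(1)]
        dwalk_edge_ends_in_dverts[OF walk_B \<open>R \<in> set PB\<close>] by simp_all
    ultimately show False
      using no_common_inner_vertex[of "tgt R"] by blast
  qed
  moreover have "src R \<noteq> v"
    using no_reach reach_refl[of "E - {R}" src tgt v] by auto
  ultimately show ?thesis
    using dwalk_edge_ends_in_dverts[OF walk_A assms(1)] by blast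
qed

lemma exit_edge_couples:
  assumes "PA = p @ R # q" "\<not> creach E Ei src tgt (src R) v" "creach E Ei src tgt (tgt R) v"
    and "PB = p' @ S # q'" "dwalk E src tgt (tgt S) q' v" "S \<in> Ei"
  shows "S \<in> coupled_plus E Ei src tgt R"
proof -
  have walk_R: "dwalk E src tgt (tgt R) q v"
    using walk_A assms(1) by (auto simp: dwalk_append)
  have walk_S: "dwalk E src tgt (src S) (S # q') v"
    using walk_B assms(4,5) by (auto simp: dwalk_append)
  have "R \<in> set PA"
    using assms(1) by simp
  have no_reach: "\<not> reach (E - {R}) src tgt (src R) v"
    using \<open>R \<in> set PA\<close> assms(2,3) by (rule exit_edge_not_reach)
  have "src R \<in> set (dverts tgt u PA) - {u, v}"
    using \<open>R \<in> set PA\<close> assms(2,3) by (rule exit_edge_source_inner)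
  then have "R \<notin> set PB"
    using no_common_inner_vertex[of "src R"] dwalk_edge_ends_in_dverts[OF walk_B, of R] by blast
  then have "set (S # q') \<subseteq> E - {R}"
    using dwalk_edges_subset[OF walk_B] assms(4) by auto
  have "distinct PA"
    using path_A by (simp add: simple_dpath_def dverts_def distinct_map)
  then have "set q \<subseteq> E - {R}"
    using dwalk_edges_subset[OF walk_A] assms(1) by auto
  show ?thesis
    by (rule coupled_plus_if_walks_avoid_edge[OF no_reach
          dwalk_mono[OF walk_R] dwalk_mono[OF walk_S] assms(6)]) fact+
qed

lemma exit_edges_not_equiv:
  assumes "R \<in> set PA" "\<not> creach E Ei src tgt (src R) v" "creach E Ei src tgt (tgt R) v"
    and "S \<in> set PB" "\<not> creach E Ei src tgt (src S) v" "creach E Ei src tgt (tgt S) v"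
  shows "\<not> equiv_inc E src tgt R S"
proof -
  interpret B: scc_separated_paths E Ei src tgt u v PB PA
    by (rule swap)
  have "src R \<in> set (dverts tgt u PA) - {u, v}" "src S \<in> set (dverts tgt u PB) - {u, v}"
    using exit_edge_source_inner[OF assms(1-3)] B.exit_edge_source_inner[OF assms(4-6)] .
  then have "\<not> same_scc E src tgt (src R) (src S)"
    using inner_separated by blast
  then show ?thesis
    unfolding equiv_inc_def same_scc_def plus_set_def by simp
qed

end

theorem lemma5p12:
  fixes E Ei :: "'e set" and src tgt :: "'e \<Rightarrow> 'v" and u v :: 'v and PA PB :: "'e list"
  assumes "query_graph E Ei src tgt"
    and "f_closed E Ei src tgt"
    and "splittable E Ei src tgt"
    and "u \<in> qvertices E src tgt" and "v \<in> qvertices E src tgt"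
    and "simple_dpath E src tgt u PA v"
    and "simple_dpath E src tgt u PB v"
    and "PA \<noteq> PB"
    and "\<forall>a \<in> set (dverts tgt u PA) - {u, v}. \<forall>b \<in> set (dverts tgt u PB) - {u, v}.
           \<not> same_scc E src tgt a b"
  shows "v \<in> oplus_set E Ei src tgt u"
proof (rule ccontr)
  interpret A: scc_separated_paths E Ei src tgt u v PA PB
    using assms by unfold_locales
  interpret B: scc_separated_paths E Ei src tgt u v PB PA
    by (rule A.swap)
  let ?to_v = "\<lambda>w. creach E Ei src tgt w v"
  assume "v \<notin> oplus_set E Ei src tgt u"
  then have not_u: "\<not> ?to_v u"
    by (simp add: oplus_set_def)
  have at_v: "?to_v v"
    by (simp add: creach_def reach_refl)
  obtain p R q where
    R: "PA = p @ R # q" "R \<in> E" "\<not> ?to_v (src R)" "?to_v (tgt R)" "dwalk E src tgt (tgt R) q v"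
    using A.walk_A not_u at_v by (rule dwalk_last_exit_edge[where P = ?to_v])
  obtain p' S q' where
    S: "PB = p' @ S # q'" "S \<in> E" "\<not> ?to_v (src S)" "?to_v (tgt S)" "dwalk E src tgt (tgt S) q' v"
    using A.walk_B not_u at_v by (rule dwalk_last_exit_edge[where P = ?to_v])
  have "R \<in> Ei" "S \<in> Ei"
    using exit_edge_inconsistent[OF R(2-4)] exit_edge_inconsistent[OF S(2-4)] .
  have "S \<in> coupled_plus E Ei src tgt R" "R \<in> coupled_plus E Ei src tgt S"
    using A.exit_edge_couples[OF R(1,3,4) S(1,5) \<open>S \<in> Ei\<close>]
      B.exit_edge_couples[OF S(1,3,4) R(1,5) \<open>R \<in> Ei\<close>] .
  moreover have "\<not> equiv_inc E src tgt R S"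
    using A.exit_edges_not_equiv[OF _ R(3,4) _ S(3,4)] R(1) S(1) by simp
  ultimately show False
    using assms(3) \<open>R \<in> Ei\<close> \<open>S \<in> Ei\<close> unfolding splittable_def by blast
qed

end
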